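(* Let $A$ be a finite abelian group with $A\cong H\times C$, $H$ a finite abelian group and $C$ cyclic. Let $M$ be a finite $\mathbb{Z}_p[A]$-module on which $H$ acts trivially and with $M^C\cong\mathbb{F}_p$. Then $N_{\mathrm{typical}}(A,M)$ is contained in the image of the (injective) inflation map $H^2(H,M^C)\to H^2(A,M)$.
   Context: For a finite abelian group $D$, subgroup $I$ with $D/I$ cyclic and finite $D$-module $M$: $\widehat D:=\hat{\mathbb{Z}}\times_{D/I}D$ (fiber product of the quotient maps), $R(D,I,M):=\ker(H^2(D,M)\xrightarrow{\inf}H^2(\widehat D,M))$. $\mathcal{C}$ is the set of pairs $(D,I)$ with $D\le A$ generated by at most two elements, $I\le D$ cyclic with $D/I$ cyclic. $N_{\mathrm{typical}}(A,M):=\ker\bigl(H^2(A,M)\to\bigoplus_{(D,I)\in\mathcal{C}}H^2(D,M)/R(D,I,M)\bigr)$, the maps being restrictions. *)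

theory Defs
  imports "HOL-Algebra.Algebra"
begin

definition nsmul :: "nat \<Rightarrow> 'm::ab_group_add \<Rightarrow> 'm" where
  "nsmul n x = (\<Sum>i<n. x)"

definition is_module :: "('g,'b) monoid_scheme \<Rightarrow> 'm::ab_group_add set \<Rightarrow> ('g \<Rightarrow> 'm \<Rightarrow> 'm) \<Rightarrow> bool" where
  "is_module G M act \<longleftrightarrow> 0 \<in> M \<and> (\<forall>x\<in>M. \<forall>y\<in>M. x + y \<in> M) \<and> (\<forall>x\<in>M. - x \<in> M) \<and>
     (\<forall>g\<in>carrier G. \<forall>x\<in>M. act g x \<in> M) \<and>
     (\<forall>g\<in>carrier G. \<forall>x\<in>M. \<forall>y\<in>M. act g (x + y) = act g x + act g y) \<and>
     (\<forall>x\<in>M. act \<one>\<^bsub>G\<^esub> x = x) \<and>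
     (\<forall>g\<in>carrier G. \<forall>h\<in>carrier G. \<forall>x\<in>M. act (g \<otimes>\<^bsub>G\<^esub> h) x = act g (act h x))"

text \<open>Inhomogeneous 2-cocycles and 2-coboundaries; a class in H^2(G,M) is represented by a
  cocycle, and it is zero iff the cocycle is a coboundary.\<close>
definition cocycle2 :: "('g,'b) monoid_scheme \<Rightarrow> 'm::ab_group_add set \<Rightarrow> ('g \<Rightarrow> 'm \<Rightarrow> 'm) \<Rightarrow> ('g \<Rightarrow> 'g \<Rightarrow> 'm) \<Rightarrow> bool" where
  "cocycle2 G M act f \<longleftrightarrow>
     (\<forall>g\<in>carrier G. \<forall>h\<in>carrier G. f g h \<in> M) \<and>
     (\<forall>g\<in>carrier G. \<forall>h\<in>carrier G. \<forall>k\<in>carrier G.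
        act g (f h k) - f (g \<otimes>\<^bsub>G\<^esub> h) k + f g (h \<otimes>\<^bsub>G\<^esub> k) - f g h = 0)"

definition coboundary2 :: "('g,'b) monoid_scheme \<Rightarrow> 'm::ab_group_add set \<Rightarrow> ('g \<Rightarrow> 'm \<Rightarrow> 'm) \<Rightarrow> ('g \<Rightarrow> 'g \<Rightarrow> 'm) \<Rightarrow> bool" where
  "coboundary2 G M act f \<longleftrightarrow>
     (\<exists>c. (\<forall>g\<in>carrier G. c g \<in> M) \<and>
        (\<forall>g\<in>carrier G. \<forall>h\<in>carrier G. f g h = act g (c h) - c (g \<otimes>\<^bsub>G\<^esub> h) + c g))"

text \<open>The finite fibre product Z/n \<times>_{D/I} D, where Z/n \<rightarrow> D/I sends 1 to the coset of gam
  (requires gam^n \<in> I).  These groups are the finite quotients (cofinal system) of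
  \<open>\<hat>D = \<hat>Z \<times>_{D/I} D\<close> through which the projection to D factors.\<close>
definition fiber_grp :: "('g,'b) monoid_scheme \<Rightarrow> 'g set \<Rightarrow> 'g set \<Rightarrow> 'g \<Rightarrow> nat \<Rightarrow> (nat \<times> 'g) monoid" where
  "fiber_grp G D I gam n =
     \<lparr>partial_object.carrier = {(k, d). k < n \<and> d \<in> D \<and> d \<otimes>\<^bsub>G\<^esub> inv\<^bsub>G\<^esub> (gam [^]\<^bsub>G\<^esub> k) \<in> I},
      monoid.mult = (\<lambda>(k, d) (k', d'). ((k + k') mod n, d \<otimes>\<^bsub>G\<^esub> d')),
      monoid.one = (0, \<one>\<^bsub>G\<^esub>)\<rparr>"

text \<open>Membership of (the class of the restriction to D of) f in R(D,I,M): the inflation to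
  the profinite group \<hat>D vanishes iff it vanishes at some finite level Z/n \<times>_{D/I} D.\<close>
definition in_R :: "('g,'b) monoid_scheme \<Rightarrow> 'm::ab_group_add set \<Rightarrow> ('g \<Rightarrow> 'm \<Rightarrow> 'm) \<Rightarrow> 'g set \<Rightarrow> 'g set \<Rightarrow> ('g \<Rightarrow> 'g \<Rightarrow> 'm) \<Rightarrow> bool" where
  "in_R G M act D I f \<longleftrightarrow>
     (\<exists>gam\<in>D. (\<forall>d\<in>D. \<exists>k::nat. d \<otimes>\<^bsub>G\<^esub> inv\<^bsub>G\<^esub> (gam [^]\<^bsub>G\<^esub> k) \<in> I) \<and>
        (\<exists>n::nat. n > 0 \<and> gam [^]\<^bsub>G\<^esub> n \<in> I \<and>
           coboundary2 (fiber_grp G D I gam n) M (\<lambda>x. act (snd x)) (\<lambda>x y. f (snd x) (snd y))))"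

definition typical_pair :: "('g,'b) monoid_scheme \<Rightarrow> 'g set \<Rightarrow> 'g set \<Rightarrow> bool" where
  "typical_pair G D I \<longleftrightarrow>
     (\<exists>a\<in>carrier G. \<exists>b\<in>carrier G. D = generate G {a, b}) \<and>
     (\<exists>c\<in>D. I = generate G {c}) \<and>
     (\<exists>gam\<in>D. \<forall>d\<in>D. \<exists>k::nat. d \<otimes>\<^bsub>G\<^esub> inv\<^bsub>G\<^esub> (gam [^]\<^bsub>G\<^esub> k) \<in> I)"

definition in_N_typical :: "('g,'b) monoid_scheme \<Rightarrow> 'm::ab_group_add set \<Rightarrow> ('g \<Rightarrow> 'm \<Rightarrow> 'm) \<Rightarrow> ('g \<Rightarrow> 'g \<Rightarrow> 'm) \<Rightarrow> bool" where
  "in_N_typical G M act f \<longleftrightarrow> cocycle2 G M act f \<and>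
     (\<forall>D I. typical_pair G D I \<longrightarrow> in_R G M act D I f)"

definition fixed_pts :: "('g \<Rightarrow> 'm \<Rightarrow> 'm) \<Rightarrow> 'g set \<Rightarrow> 'm set \<Rightarrow> 'm set" where
  "fixed_pts act C M = {x \<in> M. \<forall>c\<in>C. act c x = x}"

definition proj :: "('g,'b) monoid_scheme \<Rightarrow> 'g set \<Rightarrow> 'g set \<Rightarrow> 'g \<Rightarrow> 'g" where
  "proj G H C a = (THE h. h \<in> H \<and> (\<exists>c\<in>C. a = h \<otimes>\<^bsub>G\<^esub> c))"

end

theory Submission
  imports Defs
begin

(* Write A = H x C with C = <s>. Vanishing of the inflation of f to the fibre products over the
   pair (C, C) makes f a coboundary on C, so after subtracting a coboundary f vanishes on C x C.
   Over the pair (<h,s>, <h>), h in H, the elements (0,h) and (k,s) commute, and the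
   antisymmetrised coboundary there shows that f(h,s) - f(s,h) has the form x - s.x. This is
   exactly what is needed to subtract a second coboundary after which f vanishes whenever one
   argument lies in C. The cocycle identity then forces f to depend only on the H-components of
   its arguments and to take C-invariant values: it is inflated from a cocycle H x H -> M^C. *)

definition delta1 ::
    "('g,'b) monoid_scheme \<Rightarrow> ('g \<Rightarrow> 'm \<Rightarrow> 'm) \<Rightarrow> ('g \<Rightarrow> 'm::ab_group_add) \<Rightarrow> 'g \<Rightarrow> 'g \<Rightarrow> 'm"
  where "delta1 G act c a b = act a (c b) - c (a \<otimes>\<^bsub>G\<^esub> b) + c a"

definition cocycle1 ::
    "('g,'b) monoid_scheme \<Rightarrow> 'm::ab_group_add set \<Rightarrow> ('g \<Rightarrow> 'm \<Rightarrow> 'm) \<Rightarrow> ('g \<Rightarrow> 'm) \<Rightarrow> bool"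
  where "cocycle1 G M act K \<longleftrightarrow> (\<forall>t\<in>carrier G. K t \<in> M) \<and>
           (\<forall>t\<in>carrier G. \<forall>t'\<in>carrier G. K (t \<otimes>\<^bsub>G\<^esub> t') = K t + act t (K t'))"

lemma coboundary2_iff_delta1:
  "coboundary2 G M act f \<longleftrightarrow>
     (\<exists>c. (\<forall>a\<in>carrier G. c a \<in> M) \<and> (\<forall>a\<in>carrier G. \<forall>b\<in>carrier G. f a b = delta1 G act c a b))"
  by (simp add: coboundary2_def delta1_def)

lemma delta1_swap:
  assumes "x \<otimes>\<^bsub>G\<^esub> y = y \<otimes>\<^bsub>G\<^esub> x" and "act x (c y) = c y"
  shows "delta1 G act c x y - delta1 G act c y x = c x - act y (c x)"
  using assms by (simp add: delta1_def algebra_simps)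

lemma cocycle2_closed:
  "cocycle2 G M act f \<Longrightarrow> a \<in> carrier G \<Longrightarrow> b \<in> carrier G \<Longrightarrow> f a b \<in> M"
  by (simp add: cocycle2_def)

lemma cocycle2_identity:
  assumes "cocycle2 G M act f" "a \<in> carrier G" "b \<in> carrier G" "k \<in> carrier G"
  shows "act a (f b k) + f a (b \<otimes>\<^bsub>G\<^esub> k) = f (a \<otimes>\<^bsub>G\<^esub> b) k + f a b"
proof -
  have "act a (f b k) - f (a \<otimes>\<^bsub>G\<^esub> b) k + f a (b \<otimes>\<^bsub>G\<^esub> k) - f a b = 0"
    using assms by (simp add: cocycle2_def)
  then show ?thesis by (simp add: algebra_simps)
qed

locale group_module = group G for G (structure) +
  fixes M :: "'m::ab_group_add set" and act :: "'a \<Rightarrow> 'm \<Rightarrow> 'm"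
  assumes is_module: "is_module G M act"
begin

lemma M_zero_closed [simp]: "0 \<in> M"
  and M_add_closed [simp]: "x \<in> M \<Longrightarrow> y \<in> M \<Longrightarrow> x + y \<in> M"
  and M_uminus_closed [simp]: "x \<in> M \<Longrightarrow> - x \<in> M"
  and act_closed [simp]: "g \<in> carrier G \<Longrightarrow> x \<in> M \<Longrightarrow> act g x \<in> M"
  and act_add: "g \<in> carrier G \<Longrightarrow> x \<in> M \<Longrightarrow> y \<in> M \<Longrightarrow> act g (x + y) = act g x + act g y"
  and act_one [simp]: "x \<in> M \<Longrightarrow> act \<one> x = x"
  and act_mult: "g \<in> carrier G \<Longrightarrow> h \<in> carrier G \<Longrightarrow> x \<in> M \<Longrightarrow> act (g \<otimes> h) x = act g (act h x)"
  using is_module by (simp_all add: is_module_def)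

lemma M_diff_closed [simp]: "x \<in> M \<Longrightarrow> y \<in> M \<Longrightarrow> x - y \<in> M"
  using M_add_closed M_uminus_closed by (metis diff_conv_add_uminus)

lemma act_zero [simp]: "g \<in> carrier G \<Longrightarrow> act g 0 = 0"
  using act_add[of g 0 0] by simp

lemma act_uminus: "g \<in> carrier G \<Longrightarrow> x \<in> M \<Longrightarrow> act g (- x) = - act g x"
  using act_add[of g x "- x"] minus_unique[of "act g x" "act g (- x)"] by simp

lemma act_diff: "g \<in> carrier G \<Longrightarrow> x \<in> M \<Longrightarrow> y \<in> M \<Longrightarrow> act g (x - y) = act g x - act g y"
  using act_add[of g x "- y"] act_uminus[of g y] by simp

lemma delta1_closed:
  "\<forall>a\<in>carrier G. c a \<in> M \<Longrightarrow> a \<in> carrier G \<Longrightarrow> b \<in> carrier G \<Longrightarrow> delta1 G act c a b \<in> M"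
  by (simp add: delta1_def)

lemma delta1_add:
  assumes "\<forall>a\<in>carrier G. c a \<in> M" "\<forall>a\<in>carrier G. v a \<in> M" "a \<in> carrier G" "b \<in> carrier G"
  shows "delta1 G act (\<lambda>x. c x + v x) a b = delta1 G act c a b + delta1 G act v a b"
  using assms by (simp add: delta1_def act_add)

lemma cocycle2_delta1:
  assumes "\<forall>a\<in>carrier G. c a \<in> M"
  shows "cocycle2 G M act (delta1 G act c)"
  unfolding cocycle2_def
proof (intro conjI ballI)
  fix a b k assume "a \<in> carrier G" "b \<in> carrier G" "k \<in> carrier G"
  with assms show "act a (delta1 G act c b k) - delta1 G act c (a \<otimes> b) k
      + delta1 G act c a (b \<otimes> k) - delta1 G act c a b = 0"
    by (simp add: delta1_def act_add act_diff act_mult m_assoc)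
qed (use assms in \<open>simp add: delta1_closed\<close>)

lemma cocycle2_diff:
  assumes f: "cocycle2 G M act f" and g: "cocycle2 G M act g"
  shows "cocycle2 G M act (\<lambda>a b. f a b - g a b)"
  unfolding cocycle2_def
proof (intro conjI ballI)
  fix a b k assume abk: "a \<in> carrier G" "b \<in> carrier G" "k \<in> carrier G"
  have "act a (f b k - g b k) - (f (a \<otimes> b) k - g (a \<otimes> b) k)
      + (f a (b \<otimes> k) - g a (b \<otimes> k)) - (f a b - g a b)
      = (act a (f b k) + f a (b \<otimes> k) - (f (a \<otimes> b) k + f a b))
        - (act a (g b k) + g a (b \<otimes> k) - (g (a \<otimes> b) k + g a b))"
    using f g abk by (simp add: act_diff cocycle2_closed algebra_simps)
  also have "\<dots> = 0"
    using cocycle2_identity[OF f abk] cocycle2_identity[OF g abk] by simp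
  finally show "act a (f b k - g b k) - (f (a \<otimes> b) k - g (a \<otimes> b) k)
      + (f a (b \<otimes> k) - g a (b \<otimes> k)) - (f a b - g a b) = 0" .
qed (use f g in \<open>simp add: cocycle2_closed\<close>)

lemma cocycle2_right_one:
  assumes "cocycle2 G M act F" "F \<one> \<one> = 0" "a \<in> carrier G"
  shows "F a \<one> = 0"
  using cocycle2_identity[OF assms(1) assms(3) one_closed one_closed] assms by simp

lemma cocycle1_diff:
  assumes "C \<subseteq> carrier G"
    and "cocycle1 (G\<lparr>carrier := C\<rparr>) M act K" "cocycle1 (G\<lparr>carrier := C\<rparr>) M act L"
  shows "cocycle1 (G\<lparr>carrier := C\<rparr>) M act (\<lambda>t. K t - L t)"
  using assms by (auto simp: cocycle1_def act_diff)

lemma cocycle1_principal: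
  assumes "C \<subseteq> carrier G" "x \<in> M"
  shows "cocycle1 (G\<lparr>carrier := C\<rparr>) M act (\<lambda>t. x - act t x)"
  using assms by (auto simp: cocycle1_def act_mult act_diff subsetD)

lemma cocycle1_vanishes_on_generate:
  assumes s: "s \<in> carrier G" and K: "cocycle1 (G\<lparr>carrier := generate G {s}\<rparr>) M act K"
    and Ks: "K s = 0" and t: "t \<in> generate G {s}"
  shows "K t = 0"
proof -
  have KM: "\<And>t. t \<in> generate G {s} \<Longrightarrow> K t \<in> M"
    using K unfolding cocycle1_def by simp
  have Kmult: "\<And>t t'. t \<in> generate G {s} \<Longrightarrow> t' \<in> generate G {s} \<Longrightarrow>
      K (t \<otimes> t') = K t + act t (K t')"
    using K unfolding cocycle1_def by simp
  have K1: "K \<one> = 0"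
    using Kmult[OF generate.one generate.one] KM[OF generate.one] by simp
  show ?thesis
    using t
  proof induction
    case one
    show ?case by (rule K1)
  next
    case (incl x)
    then show ?case using Ks by simp
  next
    case (inv x)
    have x: "x = s" using inv by simp
    have inv_s: "inv s \<in> generate G {s}" by (rule generate.inv) simp
    have inv_s_carrier: "inv s \<in> carrier G" using s by simp
    have "act s (K (inv s)) = 0"
      using Kmult[OF generate.incl[of s] inv_s] s K1 Ks by simp
    then have "act (inv s) (act s (K (inv s))) = 0"
      using inv_s_carrier by simp
    then show ?case
      using x s KM[OF inv_s] by (simp flip: act_mult)
  next
    case (eng x y)
    have "x \<in> carrier G" using eng.hyps(1) s generate_in_carrier[of "{s}"] by simp
    then show ?case
      using Kmult[OF eng.hyps] eng.IH by simp
  qed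
qed

lemma coboundary2_on_subgroup_extend:
  assumes C: "subgroup C G" and f: "coboundary2 (G\<lparr>carrier := C\<rparr>) M act f"
  obtains c where "\<forall>a\<in>carrier G. c a \<in> M" "\<forall>t\<in>C. \<forall>t'\<in>C. f t t' = delta1 G act c t t'"
proof -
  obtain c0 where c0: "\<forall>t\<in>C. c0 t \<in> M" "\<forall>t\<in>C. \<forall>t'\<in>C. f t t' = delta1 G act c0 t t'"
    using f by (auto simp: coboundary2_iff_delta1 delta1_def)
  let ?c = "\<lambda>a. if a \<in> C then c0 a else 0"
  have "\<forall>t\<in>C. \<forall>t'\<in>C. f t t' = delta1 G act ?c t t'"
    using c0(2) subgroup.m_closed[OF C] by (simp add: delta1_def)
  with c0(1) show thesis by (intro that[of ?c]) auto
qed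

end

locale comm_group_module = group_module + comm_group G
begin

lemma commutator_cocycle1:
  assumes C: "subgroup C G" and F: "cocycle2 G M act F"
    and F_C: "\<forall>t\<in>C. \<forall>t'\<in>C. F t t' = 0" and h: "h \<in> carrier G"
  shows "cocycle1 (G\<lparr>carrier := C\<rparr>) M act (\<lambda>t. F h t - F t h)"
  unfolding cocycle1_def
proof (intro conjI ballI)
  fix t t' assume "t \<in> carrier (G\<lparr>carrier := C\<rparr>)" "t' \<in> carrier (G\<lparr>carrier := C\<rparr>)"
  then have tC: "t \<in> C" "t' \<in> C" by simp_all
  then have t: "t \<in> carrier G" "t' \<in> carrier G" using subgroup.subset[OF C] by auto
  have "F h (t \<otimes> t') = F (h \<otimes> t) t' + F h t"
    using cocycle2_identity[OF F h t] F_C tC h by simp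
  moreover have "F (t \<otimes> t') h = act t (F t' h) + F t (h \<otimes> t')"
    using cocycle2_identity[OF F t h] F_C tC t h by (simp add: m_comm)
  moreover have "F t (h \<otimes> t') = F (h \<otimes> t) t' + F t h - act t (F h t')"
    using cocycle2_identity[OF F t(1) h t(2)] t h by (simp add: m_comm algebra_simps)
  ultimately show "F h (t \<otimes>\<^bsub>G\<lparr>carrier := C\<rparr>\<^esub> t') - F (t \<otimes>\<^bsub>G\<lparr>carrier := C\<rparr>\<^esub> t') h
      = F h t - F t h + act t (F h t' - F t' h)"
    using F t h by (simp add: act_diff cocycle2_closed algebra_simps)
qed (use F h subgroup.subset[OF C] in \<open>auto simp: cocycle2_closed\<close>)

lemma commutator_extends_from_generator:
  assumes s: "s \<in> carrier G" and F: "cocycle2 G M act F"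
    and F_C: "\<forall>t\<in>generate G {s}. \<forall>t'\<in>generate G {s}. F t t' = 0" and h: "h \<in> carrier G"
    and x: "x \<in> M" and base: "F h s - F s h = x - act s x" and t: "t \<in> generate G {s}"
  shows "F h t - F t h = x - act t x"
proof -
  have C: "subgroup (generate G {s}) G" using s by (simp add: generate_is_subgroup)
  have "cocycle1 (G\<lparr>carrier := generate G {s}\<rparr>) M act (\<lambda>t. (F h t - F t h) - (x - act t x))"
    using cocycle1_diff[OF subgroup.subset[OF C] commutator_cocycle1[OF C F F_C h]
        cocycle1_principal[OF subgroup.subset[OF C] x]] .
  from cocycle1_vanishes_on_generate[OF s this _ t] base show ?thesis by simp
qed

end

lemma fiber_grp_carrier_iff:
  "(k, d) \<in> carrier (fiber_grp G D I gam n) \<longleftrightarrow>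
     k < n \<and> d \<in> D \<and> d \<otimes>\<^bsub>G\<^esub> inv\<^bsub>G\<^esub> (gam [^]\<^bsub>G\<^esub> k) \<in> I"
  by (simp add: fiber_grp_def)

lemma fiber_grp_mult [simp]:
  "(k, d) \<otimes>\<^bsub>fiber_grp G D I gam n\<^esub> (k', d') = ((k + k') mod n, d \<otimes>\<^bsub>G\<^esub> d')"
  by (simp add: fiber_grp_def)

context group
begin

lemma fiber_grp_lift:
  assumes I: "subgroup I G" and gam: "gam \<in> carrier G" "gam [^] n \<in> I" "0 < n"
    and d: "d \<in> D" "d \<in> carrier G" "d \<otimes> inv (gam [^] k) \<in> I"
  shows "(k mod n, d) \<in> carrier (fiber_grp G D I gam n)"
proof -
  have "gam [^] k = (gam [^] n) [^] (k div n) \<otimes> gam [^] (k mod n)"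
    using gam by (simp add: nat_pow_pow nat_pow_mult mult_div_mod_eq)
  then have "d \<otimes> inv (gam [^] (k mod n)) = (d \<otimes> inv (gam [^] k)) \<otimes> (gam [^] n) [^] (k div n)"
    using gam d by (simp add: inv_mult_group m_assoc)
  moreover have "(gam [^] n) [^] (k div n) \<in> I"
    using subgroup_int_pow_closed[OF I gam(2), of "int (k div n)"] by (simp add: int_pow_int)
  ultimately have "d \<otimes> inv (gam [^] (k mod n)) \<in> I"
    using subgroup.m_closed[OF I d(3)] by simp
  with d gam show ?thesis by (simp add: fiber_grp_carrier_iff)
qed

lemma in_R_coboundary_on_subgroup:
  assumes R: "in_R G M act D I f" and I: "I \<subseteq> D" "I \<subseteq> carrier G"
  shows "coboundary2 (G\<lparr>carrier := I\<rparr>) M act f"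
proof -
  obtain gam n c where n: "0 < n"
    and c: "\<forall>x\<in>carrier (fiber_grp G D I gam n). c x \<in> M"
    and f: "\<forall>x\<in>carrier (fiber_grp G D I gam n). \<forall>y\<in>carrier (fiber_grp G D I gam n).
              f (snd x) (snd y) = act (snd x) (c y) - c (x \<otimes>\<^bsub>fiber_grp G D I gam n\<^esub> y) + c x"
    using R unfolding in_R_def coboundary2_def by blast
  have lift: "(0, t) \<in> carrier (fiber_grp G D I gam n)" if "t \<in> I" for t
    using that I n by (auto simp: fiber_grp_carrier_iff)
  show ?thesis
    unfolding coboundary2_def
  proof (intro exI[of _ "\<lambda>t. c (0, t)"] conjI ballI)
    fix t t' assume "t \<in> carrier (G\<lparr>carrier := I\<rparr>)" "t' \<in> carrier (G\<lparr>carrier := I\<rparr>)"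
    then have "t \<in> I" "t' \<in> I" by simp_all
    then have "f (snd (0::nat, t)) (snd (0::nat, t'))
        = act (snd (0::nat, t)) (c (0, t')) - c ((0, t) \<otimes>\<^bsub>fiber_grp G D I gam n\<^esub> (0, t')) + c (0, t)"
      using f lift by blast
    then show "f t t' = act t (c (0, t')) - c (0, t \<otimes>\<^bsub>G\<lparr>carrier := I\<rparr>\<^esub> t') + c (0, t)"
      by simp
  qed (use c lift in auto)
qed

lemma in_R_commutator:
  assumes R: "in_R G M act D I f" and I: "subgroup I G" "I \<subseteq> D" and D: "D \<subseteq> carrier G"
    and h: "h \<in> I" and s: "s \<in> D" and hs: "h \<otimes> s = s \<otimes> h"
    and h_trivial: "\<forall>x\<in>M. act h x = x"
  shows "\<exists>x\<in>M. f h s - f s h = x - act s x"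
proof -
  obtain gam n c where gam: "gam \<in> D" and gam_gen: "\<forall>d\<in>D. \<exists>k::nat. d \<otimes> inv (gam [^] k) \<in> I"
    and n: "0 < n" "gam [^] n \<in> I"
    and c: "\<forall>x\<in>carrier (fiber_grp G D I gam n). c x \<in> M"
    and f: "\<forall>x\<in>carrier (fiber_grp G D I gam n). \<forall>y\<in>carrier (fiber_grp G D I gam n).
              f (snd x) (snd y) = delta1 (fiber_grp G D I gam n) (\<lambda>x. act (snd x)) c x y"
    using R unfolding in_R_def coboundary2_iff_delta1 by blast
  obtain k :: nat where k: "s \<otimes> inv (gam [^] k) \<in> I" using gam_gen s by blast
  define x where "x = (0::nat, h)"
  define y where "y = (k mod n, s)"
  have x_mem: "x \<in> carrier (fiber_grp G D I gam n)"
    using h n I subgroup.subset[OF I(1)] by (auto simp: x_def fiber_grp_carrier_iff)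
  have y_mem: "y \<in> carrier (fiber_grp G D I gam n)"
    unfolding y_def using fiber_grp_lift[OF I(1) _ n(2,1) s _ k] gam s D by blast
  have "f h s - f s h = c x - act s (c x)"
  proof -
    have "f h s - f s h = delta1 (fiber_grp G D I gam n) (\<lambda>x. act (snd x)) c x y
        - delta1 (fiber_grp G D I gam n) (\<lambda>x. act (snd x)) c y x"
      using f[rule_format, OF x_mem y_mem] f[rule_format, OF y_mem x_mem] by (simp add: x_def y_def)
    also have "\<dots> = c x - act s (c x)"
      using delta1_swap[where G = "fiber_grp G D I gam n" and act = "\<lambda>z. act (snd z)" and c = c
          and x = x and y = y] hs n h_trivial c y_mem
      by (simp add: x_def y_def)
    finally show ?thesis .
  qed
  then show ?thesis using c x_mem by blast
qed

lemma typical_pair_cyclic: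
  assumes "s \<in> carrier G"
  shows "typical_pair G (generate G {s}) (generate G {s})"
  unfolding typical_pair_def
proof (intro conjI)
  have s: "s \<in> generate G {s}" by (rule generate.incl) simp
  show "\<exists>a\<in>carrier G. \<exists>b\<in>carrier G. generate G {s} = generate G {a, b}"
    using assms by (intro bexI[of _ s]) simp_all
  show "\<exists>c\<in>generate G {s}. generate G {s} = generate G {c}"
    using s by blast
  have "\<forall>d\<in>generate G {s}. d \<otimes> inv (s [^] (0::nat)) \<in> generate G {s}"
    using generate_incl[of "{s}"] assms by auto
  then show "\<exists>gam\<in>generate G {s}. \<forall>d\<in>generate G {s}. \<exists>k::nat. d \<otimes> inv (gam [^] k) \<in> generate G {s}"
    using s by blast
qed

end

lemma (in comm_group) generate_pair_mod_generate:
  assumes fin: "finite (carrier G)" and h: "h \<in> carrier G" and s: "s \<in> carrier G"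
    and d: "d \<in> generate G {h, s}"
  shows "\<exists>k::nat. d \<otimes> inv (s [^] k) \<in> generate G {h}"
  using d
proof induction
  case one
  have "\<one> \<otimes> inv (s [^] (0::nat)) \<in> generate G {h}" by (simp add: generate.one)
  then show ?case ..
next
  case (incl x)
  then consider "x = h" | "x = s" by blast
  then show ?case
  proof cases
    case 1
    with h have "x \<otimes> inv (s [^] (0::nat)) \<in> generate G {h}" by (simp add: generate.incl)
    then show ?thesis ..
  next
    case 2
    with s have "x \<otimes> inv (s [^] (1::nat)) \<in> generate G {h}" by (simp add: generate.one)
    then show ?thesis ..
  qed
next
  case (inv x)
  then consider "x = h" | "x = s" by blast
  then show ?case
  proof cases
    case 1
    with h have "inv x \<otimes> inv (s [^] (0::nat)) \<in> generate G {h}" by (simp add: generate.inv)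
    then show ?thesis ..
  next
    case 2
    have "s [^] (order G - 1) \<otimes> s = s [^] order G"
      using s fin nat_pow_mult[of s "order G - 1" 1] order_gt_0_iff_finite by simp
    then have "inv x \<otimes> inv (s [^] (order G - 1)) = \<one>"
      using 2 s by (simp add: inv_mult_group [symmetric] pow_order_eq_1)
    then have "inv x \<otimes> inv (s [^] (order G - 1)) \<in> generate G {h}" by (simp add: generate.one)
    then show ?thesis ..
  qed
next
  case (eng x y)
  obtain k1 k2 :: nat where k: "x \<otimes> inv (s [^] k1) \<in> generate G {h}" "y \<otimes> inv (s [^] k2) \<in> generate G {h}"
    using eng.IH by blast
  have xy: "x \<in> carrier G" "y \<in> carrier G"
    using eng.hyps h s generate_in_carrier[of "{h, s}"] by auto
  have "(x \<otimes> inv (s [^] k1)) \<otimes> (y \<otimes> inv (s [^] k2)) = (x \<otimes> y) \<otimes> inv (s [^] (k1 + k2))"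
    using xy s by (simp add: inv_mult m_ac flip: nat_pow_mult)
  then have "(x \<otimes> y) \<otimes> inv (s [^] (k1 + k2)) \<in> generate G {h}"
    using generate.eng[OF k] by simp
  then show ?case ..
qed

lemma (in comm_group) typical_pair_generate_pair:
  assumes "finite (carrier G)" "h \<in> carrier G" "s \<in> carrier G"
  shows "typical_pair G (generate G {h, s}) (generate G {h})"
  unfolding typical_pair_def
proof (intro conjI)
  have "h \<in> generate G {h, s}" "s \<in> generate G {h, s}" by (auto intro: generate.incl)
  then show "\<exists>c\<in>generate G {h, s}. generate G {h} = generate G {c}"
    and "\<exists>gam\<in>generate G {h, s}. \<forall>d\<in>generate G {h, s}. \<exists>k::nat. d \<otimes> inv (gam [^] k) \<in> generate G {h}"
    using generate_pair_mod_generate[OF assms] by blast+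
qed (use assms in blast)

locale split_module = comm_group_module +
  fixes H C :: "'a set"
  assumes subgroup_H: "subgroup H G" and subgroup_C: "subgroup C G"
    and H_inter_C: "H \<inter> C = {\<one>}" and H_times_C: "\<forall>a\<in>carrier G. \<exists>h\<in>H. \<exists>t\<in>C. a = h \<otimes> t"
begin

lemma H_carrier [simp]: "h \<in> H \<Longrightarrow> h \<in> carrier G"
  and C_carrier [simp]: "t \<in> C \<Longrightarrow> t \<in> carrier G"
  using subgroup.mem_carrier[OF subgroup_H] subgroup.mem_carrier[OF subgroup_C] by auto

lemma decompose:
  assumes "a \<in> carrier G"
  obtains h t where "h \<in> H" "t \<in> C" "a = h \<otimes> t"
  using H_times_C assms by blast

lemma H_factor_unique:
  assumes h: "h \<in> H" "h' \<in> H" and t: "t \<in> C" "t' \<in> C" and eq: "h \<otimes> t = h' \<otimes> t'"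
  shows "h = h'"
proof -
  have "inv h' \<otimes> h = t' \<otimes> inv t"
    using eq h t by (metis C_carrier H_carrier inv_solve_left inv_solve_right m_assoc m_closed inv_closed)
  moreover have "inv h' \<otimes> h \<in> H" "t' \<otimes> inv t \<in> C"
    using h t subgroup_H subgroup_C by (simp_all add: subgroup.m_closed subgroup.m_inv_closed)
  ultimately have "inv h' \<otimes> h = \<one>" using H_inter_C by auto
  then have "h' \<otimes> (inv h' \<otimes> h) = h'" using h by simp
  then show ?thesis using h by (simp add: m_assoc [symmetric])
qed

definition projC :: "'a \<Rightarrow> 'a" where
  "projC a = inv (proj G H C a) \<otimes> a"

lemma proj_mult [simp]: "h \<in> H \<Longrightarrow> t \<in> C \<Longrightarrow> proj G H C (h \<otimes> t) = h"
  unfolding proj_def by (rule the_equality) (auto dest: H_factor_unique)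

lemma projC_mult [simp]: "h \<in> H \<Longrightarrow> t \<in> C \<Longrightarrow> projC (h \<otimes> t) = t"
  by (simp add: projC_def m_assoc [symmetric])

lemma proj_C [simp]: "t \<in> C \<Longrightarrow> proj G H C t = \<one>"
  and projC_C [simp]: "t \<in> C \<Longrightarrow> projC t = t"
  using proj_mult[of \<one> t] projC_mult[of \<one> t] subgroup.one_closed[OF subgroup_H] by simp_all

lemma proj_H [simp]: "h \<in> H \<Longrightarrow> proj G H C h = h"
  and projC_H [simp]: "h \<in> H \<Longrightarrow> projC h = \<one>"
  using proj_mult[of h \<one>] projC_mult[of h \<one>] subgroup.one_closed[OF subgroup_C] by simp_all

lemma proj_closed: "a \<in> carrier G \<Longrightarrow> proj G H C a \<in> H"
  and projC_closed: "a \<in> carrier G \<Longrightarrow> projC a \<in> C"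
  by (auto elim: decompose)

definition C_normalized :: "('a \<Rightarrow> 'a \<Rightarrow> 'v::zero) \<Rightarrow> bool" where
  "C_normalized g \<longleftrightarrow> (\<forall>a\<in>carrier G. \<forall>t\<in>C. g a t = 0 \<and> g t a = 0)"

lemma C_normalizedI:
  assumes g: "cocycle2 G M act g" and CC: "\<forall>t\<in>C. \<forall>t'\<in>C. g t t' = 0"
    and HC: "\<forall>h\<in>H. \<forall>t\<in>C. g h t = 0" and CH: "\<forall>t\<in>C. \<forall>h\<in>H. g t h = 0"
  shows "C_normalized g"
proof -
  have right: "g a t = 0" if a: "a \<in> carrier G" and t: "t \<in> C" for a t
  proof -
    obtain h t0 where h: "h \<in> H" "t0 \<in> C" "a = h \<otimes> t0" using decompose[OF a] .
    show ?thesis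
      using cocycle2_identity[OF g, of h t0 t] h t CC HC subgroup.m_closed[OF subgroup_C] by simp
  qed
  have "g t a = 0" if a: "a \<in> carrier G" and t: "t \<in> C" for a t
  proof -
    obtain h t0 where h: "h \<in> H" "t0 \<in> C" "a = h \<otimes> t0" using decompose[OF a] .
    show ?thesis
      using cocycle2_identity[OF g, of t h t0] h t HC CH right[of "t \<otimes> h" t0] by simp
  qed
  with right show ?thesis by (simp add: C_normalized_def)
qed

lemma C_normalized_proj:
  assumes g: "cocycle2 G M act g" and "C_normalized g" and a: "a \<in> carrier G" and b: "b \<in> carrier G"
  shows "g a b = g (proj G H C a) (proj G H C b)"
proof -
  have gC: "g x t = 0" "g t x = 0" if "x \<in> carrier G" "t \<in> C" for x t
    using \<open>C_normalized g\<close> that by (simp_all add: C_normalized_def)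
  have shift: "g x (t \<otimes> y) = g (x \<otimes> t) y" if "x \<in> carrier G" "y \<in> carrier G" "t \<in> C" for x y t
    using cocycle2_identity[OF g, of x t y] gC that by simp
  have drop: "g x (y \<otimes> t) = g x y" if "x \<in> carrier G" "y \<in> carrier G" "t \<in> C" for x y t
    using cocycle2_identity[OF g, of x y t] gC that by simp
  obtain h t where h: "h \<in> H" "t \<in> C" "a = h \<otimes> t" using decompose[OF a] .
  obtain h' t' where h': "h' \<in> H" "t' \<in> C" "b = h' \<otimes> t'" using decompose[OF b] .
  have "g a b = g (h \<otimes> t) h'" using drop h h' by simp
  also have "\<dots> = g h (t \<otimes> h')" using shift h h' by simp
  also have "\<dots> = g h (h' \<otimes> t)" using h h' by (simp add: m_comm)
  also have "\<dots> = g h h'" using drop h h' by simp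
  finally show ?thesis using h h' by simp
qed

lemma C_normalized_invariant:
  assumes g: "cocycle2 G M act g" and "C_normalized g" and t: "t \<in> C" and h: "h \<in> H" "h' \<in> H"
  shows "act t (g h h') = g h h'"
proof -
  have "act t (g h h') = g (t \<otimes> h) h'"
    using cocycle2_identity[OF g, of t h h'] \<open>C_normalized g\<close> t h by (simp add: C_normalized_def)
  also have "\<dots> = g h h'"
    using C_normalized_proj[OF assms(1,2), of "h \<otimes> t" h'] t h by (simp add: m_comm)
  finally show ?thesis .
qed

lemma C_normalized_restrict:
  assumes g: "cocycle2 G M act g" and "C_normalized g"
  shows "cocycle2 (G\<lparr>carrier := H\<rparr>) (fixed_pts act C M) act g"
  using C_normalized_invariant[OF assms] cocycle2_closed[OF g] cocycle2_identity[OF g]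
  by (auto simp: cocycle2_def fixed_pts_def algebra_simps)

end

locale cyclic_split_module = split_module +
  fixes s :: 'a
  assumes s_carrier: "s \<in> carrier G" and C_generate: "C = generate G {s}"
    and H_trivial: "\<forall>h\<in>H. \<forall>x\<in>M. act h x = x"
begin

lemma commutator_condition_diff_delta1:
  assumes base: "\<forall>h\<in>H. \<exists>x\<in>M. f h s - f s h = x - act s x" and c: "\<forall>a\<in>carrier G. c a \<in> M"
  shows "\<forall>h\<in>H. \<exists>x\<in>M.
           (f h s - delta1 G act c h s) - (f s h - delta1 G act c s h) = x - act s x"
proof
  fix h assume h: "h \<in> H"
  obtain x where x: "x \<in> M" "f h s - f s h = x - act s x" using base h by blast
  have "delta1 G act c h s - delta1 G act c s h = c h - act s (c h)"
    using delta1_swap[where G = G and act = act and c = c and x = h and y = s] h s_carrier H_trivial c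
    by (simp add: m_comm)
  then have "(f h s - delta1 G act c h s) - (f s h - delta1 G act c s h) = (x - c h) - act s (x - c h)"
    using x h s_carrier c by (simp add: act_diff algebra_simps)
  then show "\<exists>x\<in>M. (f h s - delta1 G act c h s) - (f s h - delta1 G act c s h) = x - act s x"
    using x h c by auto
qed

lemma exists_C_normalized_cohomologous:
  assumes F: "cocycle2 G M act F" and F_C: "\<forall>t\<in>C. \<forall>t'\<in>C. F t t' = 0"
    and base: "\<forall>h\<in>H. \<exists>x\<in>M. F h s - F s h = x - act s x"
  obtains v where "\<forall>a\<in>carrier G. v a \<in> M" "C_normalized (\<lambda>a b. F a b - delta1 G act v a b)"
proof -
  have one_C: "\<one> \<in> C" and s_C: "s \<in> C"
    using subgroup.one_closed[OF subgroup_C] C_generate by (auto intro: generate.incl)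
  (* choosing z 1 = 0 makes v vanish on C *)
  obtain z where z: "\<forall>h\<in>H. z h \<in> M \<and> F h s - F s h = z h - act s (z h)" and z_one: "z \<one> = 0"
  proof -
    obtain z0 where "\<forall>h\<in>H. z0 h \<in> M \<and> F h s - F s h = z0 h - act s (z0 h)"
      using base by metis
    then have "\<forall>h\<in>H. (if h = \<one> then 0 else z0 h) \<in> M \<and>
        F h s - F s h = (if h = \<one> then 0 else z0 h) - act s (if h = \<one> then 0 else z0 h)"
      using F_C one_C s_C s_carrier by auto
    then show thesis by (rule that) simp
  qed
  have F_comm: "F h t - F t h = z h - act t (z h)" if "h \<in> H" "t \<in> C" for h t
    using commutator_extends_from_generator[OF s_carrier F, of h "z h" t] F_C z that C_generate by simp
  have F_right_one: "F a \<one> = 0" if "a \<in> carrier G" for a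
    using cocycle2_right_one[OF F _ that] F_C one_C by simp
  define v where "v a = z (proj G H C a) - F (proj G H C a) (projC a)" for a
  have v_M: "\<forall>a\<in>carrier G. v a \<in> M"
    using z proj_closed projC_closed cocycle2_closed[OF F] by (simp add: v_def)
  have v_C: "v t = 0" if "t \<in> C" for t
    using that z_one F_C one_C by (simp add: v_def)
  have v_H: "v h = z h" if "h \<in> H" for h
    using that F_right_one by (simp add: v_def)
  have v_HC: "v (h \<otimes> t) = z h - F h t" if "h \<in> H" "t \<in> C" for h t
    using that by (simp add: v_def)
  let ?g = "\<lambda>a b. F a b - delta1 G act v a b"
  have "C_normalized ?g"
  proof (rule C_normalizedI)
    show "cocycle2 G M act ?g" using cocycle2_diff[OF F cocycle2_delta1[OF v_M]] .
    show "\<forall>t\<in>C. \<forall>t'\<in>C. ?g t t' = 0"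
      using F_C v_C subgroup.m_closed[OF subgroup_C] by (simp add: delta1_def)
    show "\<forall>h\<in>H. \<forall>t\<in>C. ?g h t = 0"
      using v_C v_H v_HC F_right_one by (simp add: delta1_def)
    show "\<forall>t\<in>C. \<forall>h\<in>H. ?g t h = 0"
    proof (intro ballI)
      fix t h assume t: "t \<in> C" and h: "h \<in> H"
      have "?g t h = (z h - act t (z h)) - (F h t - F t h)"
        using v_C[OF t] v_H[OF h] v_HC[OF h t] t h by (simp add: delta1_def m_comm algebra_simps)
      then show "?g t h = 0" using F_comm[OF h t] by simp
    qed
  qed
  with v_M show thesis by (rule that)
qed

theorem cohomologous_to_inflation:
  assumes f: "cocycle2 G M act f" and f_C: "coboundary2 (G\<lparr>carrier := C\<rparr>) M act f"
    and base: "\<forall>h\<in>H. \<exists>x\<in>M. f h s - f s h = x - act s x"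
  shows "\<exists>\<phi>. cocycle2 (G\<lparr>carrier := H\<rparr>) (fixed_pts act C M) act \<phi> \<and>
           coboundary2 G M act (\<lambda>a b. f a b - \<phi> (proj G H C a) (proj G H C b))"
proof -
  obtain c where c_M: "\<forall>a\<in>carrier G. c a \<in> M" and c: "\<forall>t\<in>C. \<forall>t'\<in>C. f t t' = delta1 G act c t t'"
    using coboundary2_on_subgroup_extend[OF subgroup_C f_C] by blast
  define F where "F a b = f a b - delta1 G act c a b" for a b
  have F: "cocycle2 G M act F"
    unfolding F_def using cocycle2_diff[OF f cocycle2_delta1[OF c_M]] .
  have F_base: "\<forall>h\<in>H. \<exists>x\<in>M. F h s - F s h = x - act s x"
    unfolding F_def using commutator_condition_diff_delta1[OF base c_M] .
  have F_C: "\<forall>t\<in>C. \<forall>t'\<in>C. F t t' = 0"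
    using c by (simp add: F_def)
  obtain v where v_M: "\<forall>a\<in>carrier G. v a \<in> M"
    and normalized: "C_normalized (\<lambda>a b. F a b - delta1 G act v a b)"
    using exists_C_normalized_cohomologous[OF F F_C F_base] by blast
  define g where "g a b = F a b - delta1 G act v a b" for a b
  have g_cocycle: "cocycle2 G M act g"
    unfolding g_def using cocycle2_diff[OF F cocycle2_delta1[OF v_M]] .
  have g_normalized: "C_normalized g"
    using normalized by (simp add: g_def [abs_def])
  have "coboundary2 G M act (\<lambda>a b. f a b - g (proj G H C a) (proj G H C b))"
    unfolding coboundary2_iff_delta1
  proof (intro exI[of _ "\<lambda>a. c a + v a"] conjI ballI)
    fix a b assume a: "a \<in> carrier G" and b: "b \<in> carrier G"
    have "g (proj G H C a) (proj G H C b) = g a b"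
      using C_normalized_proj[OF g_cocycle g_normalized a b] by simp
    then show "f a b - g (proj G H C a) (proj G H C b) = delta1 G act (\<lambda>a. c a + v a) a b"
      using delta1_add[OF c_M v_M a b] by (simp add: g_def F_def)
  qed (use c_M v_M in simp)
  moreover have "cocycle2 (G\<lparr>carrier := H\<rparr>) (fixed_pts act C M) act g"
    using C_normalized_restrict[OF g_cocycle g_normalized] .
  ultimately show ?thesis by blast
qed

end

theorem mainTheorem12:
  fixes G :: "('g,'b) monoid_scheme" and H C :: "'g set" and p :: nat
    and M :: "'m::ab_group_add set" and act :: "'g \<Rightarrow> 'm \<Rightarrow> 'm" and f :: "'g \<Rightarrow> 'g \<Rightarrow> 'm"
  assumes "comm_group G" and "finite (carrier G)"
    and "subgroup H G" and "subgroup C G" and "H \<inter> C = {\<one>\<^bsub>G\<^esub>}"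
    and "\<forall>a\<in>carrier G. \<exists>h\<in>H. \<exists>c\<in>C. a = h \<otimes>\<^bsub>G\<^esub> c"
    and "\<exists>c\<in>carrier G. C = generate G {c}"
    and "Factorial_Ring.prime p" and "finite M" and "is_module G M act"
    and "\<forall>x\<in>M. \<exists>k. nsmul (p ^ k) x = 0"
    and "\<forall>h\<in>H. \<forall>x\<in>M. act h x = x"
    and "\<exists>\<phi>. bij_betw \<phi> (fixed_pts act C M) {0..<p} \<and>
           (\<forall>x\<in>fixed_pts act C M. \<forall>y\<in>fixed_pts act C M. \<phi> (x + y) = (\<phi> x + \<phi> y) mod p)"
    and "in_N_typical G M act f"
  shows "\<exists>\<phi>. cocycle2 (G\<lparr>carrier := H\<rparr>) (fixed_pts act C M) act \<phi> \<and>
           coboundary2 G M act (\<lambda>a b. f a b - \<phi> (proj G H C a) (proj G H C b))"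
proof -
  obtain s where s: "s \<in> carrier G" and C: "C = generate G {s}" using assms(7) by blast
  interpret comm_group G by (rule assms(1))
  interpret cyclic_split_module G M act H C s
    using assms(3-6,10,12) s C
    by intro_locales (simp_all add: group_module_axioms_def split_module_axioms_def
        cyclic_split_module_axioms_def)
  have f: "cocycle2 G M act f" and R: "\<And>D I. typical_pair G D I \<Longrightarrow> in_R G M act D I f"
    using assms(14) by (simp_all add: in_N_typical_def)
  have "coboundary2 (G\<lparr>carrier := C\<rparr>) M act f"
    using in_R_coboundary_on_subgroup[OF R[OF typical_pair_cyclic[OF s]]] generate_incl[of "{s}"] s C
    by simp
  moreover have "\<exists>x\<in>M. f h s - f s h = x - act s x" if h: "h \<in> H" for h
  proof (rule in_R_commutator[OF R[OF typical_pair_generate_pair[OF assms(2) _ s]]])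
    show "subgroup (generate G {h}) G" "generate G {h, s} \<subseteq> carrier G"
      using h s by (simp_all add: generate_is_subgroup generate_incl)
    show "generate G {h} \<subseteq> generate G {h, s}" by (rule mono_generate) blast
    show "h \<in> generate G {h}" "s \<in> generate G {h, s}" by (auto intro: generate.incl)
  qed (use h s assms(12) in \<open>simp_all add: m_comm\<close>)
  ultimately show ?thesis using cohomologous_to_inflation[OF f] by blast
qed

end
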